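(* Let $G=(V,E)$ be a connected finite directed graph and $\nu$ a measure on $E$ with $\nu(e)>0$ for all $e\in E$. Let $|||\cdot|||$ be a seminorm on $\mathbb{R}^V$ with $|||\mathsf 1_V|||=0$ and let $C\in[0,\infty)$. If $|||\mathsf 1_A|||\le C\|\mathsf 1_A\|_{W^{1,1}(\nu)}$ for all simply connected sets $A\subseteq V$, then $|||f|||\le C\|f\|_{W^{1,1}(\nu)}$ for all $f:V\to\mathbb{R}$.
   Context: For $f:V\to\mathbb{R}$, $\|f\|_{W^{1,1}(\nu)}=\sum_{uv\in E}|f(v)-f(u)|\,\nu(uv)$. A set $A\subseteq V$ is simply connected if both $A$ and its complement $A^c=V\setminus A$ induce connected subgraphs (of the underlying undirected graph). $\mathsf 1_A$ is the indicator function of $A$. *)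

theory Defs
  imports Main "HOL-Analysis.Analysis"
begin

text \<open>Directed graph on the finite vertex type 'a (vertex set V = UNIV), edge set
  E :: ('a * 'a) set; an edge uv is the pair (u,v).\<close>

definition induces_connected :: "('a \<times> 'a) set \<Rightarrow> 'a set \<Rightarrow> bool" where
  "induces_connected E A \<longleftrightarrow>
     (\<forall>u\<in>A. \<forall>v\<in>A. (u, v) \<in> ({(x, y). x \<in> A \<and> y \<in> A \<and> ((x, y) \<in> E \<or> (y, x) \<in> E)})\<^sup>*)"

definition graph_connected :: "('a \<times> 'a) set \<Rightarrow> bool" where
  "graph_connected E \<longleftrightarrow> induces_connected E UNIV"

definition simply_connected :: "('a \<times> 'a) set \<Rightarrow> 'a set \<Rightarrow> bool" where
  "simply_connected E A \<longleftrightarrow> induces_connected E A \<and> induces_connected E (UNIV - A)"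

definition W11_norm :: "('a \<times> 'a) set \<Rightarrow> ('a \<times> 'a \<Rightarrow> real) \<Rightarrow> ('a \<Rightarrow> real) \<Rightarrow> real" where
  "W11_norm E \<nu> f = (\<Sum>e\<in>E. \<bar>f (snd e) - f (fst e)\<bar> * \<nu> e)"

definition is_seminorm :: "(('a \<Rightarrow> real) \<Rightarrow> real) \<Rightarrow> bool" where
  "is_seminorm N \<longleftrightarrow> (\<forall>f g. N (\<lambda>x. f x + g x) \<le> N f + N g) \<and>
                      (\<forall>c f. N (\<lambda>x. c * f x) = \<bar>c\<bar> * N f)"

definition indic :: "'a set \<Rightarrow> 'a \<Rightarrow> real" where
  "indic A = (\<lambda>x. if x \<in> A then 1 else 0)"

end

theory Submission
  imports Defs
begin

text \<open>Call \<open>A\<close> good if \<open>N (indic A) \<le> C * W11_norm E \<nu> (indic A)\<close>. Since \<open>N\<close> vanishes on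
  constants and \<open>indic (- A) = 1 - indic A\<close>, good sets are closed under complement; and the
  union of two good sets with no edge between them is good, because \<open>N\<close> is subadditive and
  \<open>W11_norm\<close> additive on such a union. These two operations generate all sets from the simply
  connected ones: a disconnected set splits into separated parts, and if \<open>A\<close> is connected but
  \<open>- A = B\<^sub>1 \<union> B\<^sub>2\<close> splits, then \<open>A \<union> B\<^sub>1\<close> and \<open>A \<union> B\<^sub>2\<close> are connected with smaller complements.
  Finally, if \<open>m < m'\<close> are the two smallest values of \<open>f\<close>, then
  \<open>f = max f m' + (m - m') * indic {f = m}\<close> and \<open>W11_norm\<close> is additive on this decomposition,
  so induction on the number of values of \<open>f\<close> reduces the claim to indicators.\<close>

definition induced_edges :: "('a \<times> 'a) set \<Rightarrow> 'a set \<Rightarrow> ('a \<times> 'a) set" where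
  "induced_edges E S = {(x, y). x \<in> S \<and> y \<in> S \<and> ((x, y) \<in> E \<or> (y, x) \<in> E)}"

definition separated :: "('a \<times> 'a) set \<Rightarrow> 'a set \<Rightarrow> 'a set \<Rightarrow> bool" where
  "separated E S T \<longleftrightarrow> S \<inter> T = {} \<and> (\<forall>x\<in>S. \<forall>y\<in>T. (x, y) \<notin> E \<and> (y, x) \<notin> E)"

lemma induces_connected_iff:
  "induces_connected E S \<longleftrightarrow> (\<forall>u\<in>S. \<forall>v\<in>S. (u, v) \<in> (induced_edges E S)\<^sup>*)"
  unfolding induces_connected_def induced_edges_def by simp

lemma sym_induced_edges: "sym (induced_edges E S)"
  unfolding induced_edges_def sym_def by auto

lemma induced_edges_mono: "S \<subseteq> T \<Longrightarrow> induced_edges E S \<subseteq> induced_edges E T"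
  unfolding induced_edges_def by auto

lemma separated_sym: "separated E S T \<Longrightarrow> separated E T S"
  unfolding separated_def by blast

lemma not_induces_connected_split:
  assumes "\<not> induces_connected E S"
  obtains S\<^sub>1 S\<^sub>2 where "S = S\<^sub>1 \<union> S\<^sub>2" "S\<^sub>1 \<noteq> {}" "S\<^sub>2 \<noteq> {}" "separated E S\<^sub>1 S\<^sub>2"
proof -
  obtain u v where uv: "u \<in> S" "v \<in> S" "(u, v) \<notin> (induced_edges E S)\<^sup>*"
    using assms unfolding induces_connected_iff by blast
  define S\<^sub>1 where "S\<^sub>1 = {w \<in> S. (u, w) \<in> (induced_edges E S)\<^sup>*}"
  have "(x, y) \<notin> E \<and> (y, x) \<notin> E" if "x \<in> S\<^sub>1" "y \<in> S - S\<^sub>1" for x y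
  proof (rule ccontr)
    assume "\<not> ((x, y) \<notin> E \<and> (y, x) \<notin> E)"
    then have "(x, y) \<in> induced_edges E S"
      using that unfolding induced_edges_def S\<^sub>1_def by auto
    with that show False
      unfolding S\<^sub>1_def by (auto intro: rtrancl_into_rtrancl)
  qed
  then have "separated E S\<^sub>1 (S - S\<^sub>1)"
    unfolding separated_def by blast
  moreover have "u \<in> S\<^sub>1" "v \<in> S - S\<^sub>1"
    using uv unfolding S\<^sub>1_def by auto
  ultimately show thesis
    using that[of S\<^sub>1 "S - S\<^sub>1"] unfolding S\<^sub>1_def by blast
qed

lemma induces_connected_Un_separated:
  assumes "graph_connected E" "induces_connected E A" "A \<noteq> {}"
    and "separated E B\<^sub>1 B\<^sub>2" "A \<union> B\<^sub>1 \<union> B\<^sub>2 = UNIV"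
  shows "induces_connected E (A \<union> B\<^sub>1)"
proof -
  let ?R = "induced_edges E (A \<union> B\<^sub>1)"
  obtain a\<^sub>0 where "a\<^sub>0 \<in> A"
    using \<open>A \<noteq> {}\<close> by blast
  have reaches_A: "\<exists>a\<in>A. (b, a) \<in> ?R\<^sup>*" if "b \<in> A \<union> B\<^sub>1" for b
  proof -
    have "(b, a\<^sub>0) \<in> (induced_edges E UNIV)\<^sup>*"
      using \<open>graph_connected E\<close> unfolding graph_connected_def induces_connected_iff by blast
    then show ?thesis
      using that
    proof (induction rule: converse_rtrancl_induct)
      case base
      then show ?case
        using \<open>a\<^sub>0 \<in> A\<close> by blast
    next
      case (step b b')
      show ?case
      proof (cases "b \<in> A")
        case False
        then have "b' \<in> A \<union> B\<^sub>1" "(b, b') \<in> ?R"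
          using step.hyps(1) step.prems assms(4,5) unfolding separated_def induced_edges_def
          by auto
        then show ?thesis
          using step.IH by (meson converse_rtrancl_into_rtrancl)
      qed blast
    qed
  qed
  have A_connected: "(a, a') \<in> ?R\<^sup>*" if "a \<in> A" "a' \<in> A" for a a'
    using \<open>induces_connected E A\<close> that rtrancl_mono[OF induced_edges_mono[of A "A \<union> B\<^sub>1" E]]
    unfolding induces_connected_iff by blast
  show ?thesis
    unfolding induces_connected_iff
  proof (intro ballI)
    fix u v
    assume "u \<in> A \<union> B\<^sub>1" "v \<in> A \<union> B\<^sub>1"
    then obtain a a' where "a \<in> A" "(u, a) \<in> ?R\<^sup>*" "a' \<in> A" "(v, a') \<in> ?R\<^sup>*"
      using reaches_A by meson
    moreover have "(a', v) \<in> ?R\<^sup>*"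
      using \<open>(v, a') \<in> ?R\<^sup>*\<close> by (rule symD[OF sym_rtrancl[OF sym_induced_edges]])
    ultimately show "(u, v) \<in> ?R\<^sup>*"
      using A_connected by (meson rtrancl_trans)
  qed
qed

lemma simply_connected_induct [consumes 1, case_names simply_connected Compl separated_Un]:
  fixes P :: "'a::finite set \<Rightarrow> bool"
  assumes "graph_connected E"
    and simply_connected: "\<And>A. simply_connected E A \<Longrightarrow> P A"
    and Compl: "\<And>A. P A \<Longrightarrow> P (- A)"
    and separated_Un: "\<And>A B. separated E A B \<Longrightarrow> P A \<Longrightarrow> P B \<Longrightarrow> P (A \<union> B)"
  shows "P A"
proof -
  have connected: "P A" if "induces_connected E A" for A
    using that
  proof (induction "card (- A)" arbitrary: A rule: less_induct)
    case less
    show ?case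
    proof (cases "induces_connected E (- A)")
      case True
      then show ?thesis
        using simply_connected less.prems unfolding simply_connected_def Compl_eq_Diff_UNIV
        by blast
    next
      case False
      then obtain B\<^sub>1 B\<^sub>2 where B: "- A = B\<^sub>1 \<union> B\<^sub>2" "B\<^sub>1 \<noteq> {}" "B\<^sub>2 \<noteq> {}" "separated E B\<^sub>1 B\<^sub>2"
        by (rule not_induces_connected_split)
      have "A \<noteq> {}"
        using False \<open>graph_connected E\<close> unfolding graph_connected_def by auto
      have part: "P B\<^sub>2" if "separated E B\<^sub>1 B\<^sub>2" "- A = B\<^sub>1 \<union> B\<^sub>2" "B\<^sub>1 \<noteq> {}" for B\<^sub>1 B\<^sub>2
      proof -
        have cover: "A \<union> B\<^sub>1 \<union> B\<^sub>2 = UNIV" and rest: "- (A \<union> B\<^sub>1) = B\<^sub>2"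
          using that unfolding separated_def by auto
        have "induces_connected E (A \<union> B\<^sub>1)"
          using induces_connected_Un_separated[OF \<open>graph_connected E\<close> less.prems \<open>A \<noteq> {}\<close>]
            that(1) cover .
        moreover have "card B\<^sub>2 < card (- A)"
          using that unfolding separated_def by (intro psubset_card_mono) auto
        ultimately have "P (A \<union> B\<^sub>1)"
          using less.hyps rest by simp
        then show "P B\<^sub>2"
          using Compl[of "A \<union> B\<^sub>1"] rest by simp
      qed
      have "P B\<^sub>2"
        using part B by blast
      moreover have "P B\<^sub>1"
        using part[OF separated_sym[OF B(4)]] B(1,3) by (simp add: sup_commute)
      ultimately have "P (- A)"
        using B separated_Un by simp
      then show ?thesis
        using Compl[of "- A"] by simp
    qed
  qed
  show "P A"
  proof (induction "card A" arbitrary: A rule: less_induct)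
    case less
    show ?case
    proof (cases "induces_connected E A")
      case False
      then obtain A\<^sub>1 A\<^sub>2 where A: "A = A\<^sub>1 \<union> A\<^sub>2" "A\<^sub>1 \<noteq> {}" "A\<^sub>2 \<noteq> {}" "separated E A\<^sub>1 A\<^sub>2"
        by (rule not_induces_connected_split)
      then have "card A\<^sub>1 < card A" "card A\<^sub>2 < card A"
        unfolding separated_def by (auto intro!: psubset_card_mono)
      then show ?thesis
        using A less.hyps separated_Un by blast
    qed (rule connected)
  qed
qed

lemma seminorm_add: "is_seminorm N \<Longrightarrow> N (\<lambda>x. f x + g x) \<le> N f + N g"
  unfolding is_seminorm_def by blast

lemma seminorm_scale: "is_seminorm N \<Longrightarrow> N (\<lambda>x. c * f x) = \<bar>c\<bar> * N f"
  unfolding is_seminorm_def by blast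

lemma seminorm_const:
  assumes "is_seminorm N" "N (indic UNIV) = 0"
  shows "N (\<lambda>x. c) = 0"
  using seminorm_scale[OF assms(1), of c "indic UNIV"] assms(2) by (simp add: indic_def)

lemma seminorm_indic_Compl:
  assumes "is_seminorm N" "N (indic UNIV) = 0"
  shows "N (indic (- A)) = N (indic A)"
proof -
  have "N (indic (- A)) \<le> N (indic A)" for A :: "'a set"
  proof -
    have "indic (- A) = (\<lambda>x. 1 + (- 1) * indic A x)"
      by (auto simp: indic_def)
    then have "N (indic (- A)) \<le> N (\<lambda>x. 1) + N (\<lambda>x. (- 1) * indic A x)"
      by (simp only: seminorm_add[OF assms(1)])
    then show ?thesis
      using seminorm_const[OF assms, of 1] seminorm_scale[OF assms(1), of "- 1" "indic A"] by simp
  qed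
  from this[of A] this[of "- A"] show ?thesis
    by simp
qed

lemma seminorm_indic_Un_le:
  assumes "is_seminorm N" "A \<inter> B = {}"
  shows "N (indic (A \<union> B)) \<le> N (indic A) + N (indic B)"
proof -
  have "indic (A \<union> B) = (\<lambda>x. indic A x + indic B x)"
    using assms(2) by (auto simp: indic_def fun_eq_iff)
  then show ?thesis
    using seminorm_add[OF assms(1)] by simp
qed

lemma W11_norm_const: "W11_norm E \<nu> (\<lambda>x. c) = 0"
  unfolding W11_norm_def by simp

lemma W11_norm_indic_Compl: "W11_norm E \<nu> (indic (- A)) = W11_norm E \<nu> (indic A)"
  unfolding W11_norm_def indic_def by (intro sum.cong) auto

lemma W11_norm_edgewise_add:
  assumes "\<And>u v. (u, v) \<in> E \<Longrightarrow> \<bar>h v - h u\<bar> = \<bar>f v - f u\<bar> + c * \<bar>g v - g u\<bar>"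
  shows "W11_norm E \<nu> h = W11_norm E \<nu> f + c * W11_norm E \<nu> g"
proof -
  have "W11_norm E \<nu> h = (\<Sum>e\<in>E. \<bar>f (snd e) - f (fst e)\<bar> * \<nu> e
                                + c * (\<bar>g (snd e) - g (fst e)\<bar> * \<nu> e))"
    unfolding W11_norm_def using assms by (intro sum.cong) (auto simp: algebra_simps)
  then show ?thesis
    unfolding W11_norm_def by (simp add: sum.distrib sum_distrib_left)
qed

lemma W11_norm_indic_Un_separated:
  assumes "separated E A B"
  shows "W11_norm E \<nu> (indic (A \<union> B)) = W11_norm E \<nu> (indic A) + W11_norm E \<nu> (indic B)"
proof -
  have "W11_norm E \<nu> (indic (A \<union> B)) = W11_norm E \<nu> (indic A) + 1 * W11_norm E \<nu> (indic B)"
  proof (rule W11_norm_edgewise_add)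
    fix u v
    assume "(u, v) \<in> E"
    then show "\<bar>indic (A \<union> B) v - indic (A \<union> B) u\<bar>
                 = \<bar>indic A v - indic A u\<bar> + 1 * \<bar>indic B v - indic B u\<bar>"
      using assms unfolding separated_def indic_def by auto
  qed
  then show ?thesis
    by simp
qed

lemma W11_norm_split_min_level:
  assumes "m < m'" "\<And>x. f x = m \<or> m' \<le> f x"
  shows "W11_norm E \<nu> f
           = W11_norm E \<nu> (\<lambda>x. max (f x) m') + (m' - m) * W11_norm E \<nu> (indic {x. f x = m})"
proof (rule W11_norm_edgewise_add)
  fix u v
  show "\<bar>f v - f u\<bar> = \<bar>max (f v) m' - max (f u) m'\<bar>
                        + (m' - m) * \<bar>indic {x. f x = m} v - indic {x. f x = m} u\<bar>"
    using assms(1) assms(2)[of u] assms(2)[of v] by (auto simp: indic_def)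
qed

lemma seminorm_le_W11_norm_if_indic:
  fixes f :: "'a::finite \<Rightarrow> real"
  assumes "is_seminorm N" "N (indic UNIV) = 0"
    and indic_bound: "\<And>A. N (indic A) \<le> C * W11_norm E \<nu> (indic A)"
  shows "N f \<le> C * W11_norm E \<nu> f"
proof (induction "card (range f)" arbitrary: f rule: less_induct)
  case less
  define m where "m = Min (range f)"
  have "m \<in> range f" "\<And>x. m \<le> f x"
    unfolding m_def by auto
  show ?case
  proof (cases "range f = {m}")
    case True
    then have "f = (\<lambda>x. m)"
      by auto
    then show ?thesis
      by (simp add: seminorm_const[OF assms(1,2)] W11_norm_const)
  next
    case False
    define m' where "m' = Min (range f - {m})"
    have "range f - {m} \<noteq> {}"
      using False \<open>m \<in> range f\<close> by blast
    then have "m' \<in> range f - {m}" "\<And>x. f x \<noteq> m \<Longrightarrow> m' \<le> f x"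
      unfolding m'_def using Min_in[of "range f - {m}"] by auto
    then have "m < m'" and levels: "\<And>x. f x = m \<or> m' \<le> f x"
      using \<open>\<And>x. m \<le> f x\<close> by (auto simp: order_less_le)
    define g where "g = (\<lambda>x. max (f x) m')"
    define S where "S = {x. f x = m}"
    have "range g \<subseteq> range f - {m}"
      using \<open>m' \<in> range f - {m}\<close> \<open>m < m'\<close> levels unfolding g_def by (auto simp: max_def)
    then have "card (range g) \<le> card (range f - {m})"
      by (simp add: card_mono)
    also have "\<dots> < card (range f)"
      using card_Diff1_less[OF _ \<open>m \<in> range f\<close>] by simp
    finally have "card (range g) < card (range f)" .
    then have g_bound: "N g \<le> C * W11_norm E \<nu> g"
      using less.hyps by blast
    have W11_norm_split: "W11_norm E \<nu> f = W11_norm E \<nu> g + (m' - m) * W11_norm E \<nu> (indic S)"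
      unfolding g_def S_def by (rule W11_norm_split_min_level[OF \<open>m < m'\<close> levels])
    have "f = (\<lambda>x. g x + (m - m') * indic S x)"
      using levels \<open>m < m'\<close> unfolding g_def S_def indic_def by force
    then have "N f \<le> N g + N (\<lambda>x. (m - m') * indic S x)"
      using seminorm_add[OF assms(1), of g] by simp
    also have "N (\<lambda>x. (m - m') * indic S x) = (m' - m) * N (indic S)"
      using seminorm_scale[OF assms(1)] \<open>m < m'\<close> by simp
    also have "N g + (m' - m) * N (indic S)
                 \<le> C * W11_norm E \<nu> g + (m' - m) * (C * W11_norm E \<nu> (indic S))"
      using g_bound indic_bound \<open>m < m'\<close> by (intro add_mono mult_left_mono) auto
    also have "\<dots> = C * W11_norm E \<nu> f"
      unfolding W11_norm_split by (simp add: algebra_simps)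
    finally show ?thesis .
  qed
qed

theorem theorem2p3:
  fixes E :: "('a::finite \<times> 'a) set"
    and \<nu> :: "'a \<times> 'a \<Rightarrow> real"
    and N :: "('a \<Rightarrow> real) \<Rightarrow> real"
    and C :: real
  assumes "graph_connected E"
    and "\<forall>e\<in>E. \<nu> e > 0"
    and "is_seminorm N"
    and "N (indic UNIV) = 0"
    and "C \<ge> 0"
    and "\<forall>A. simply_connected E A \<longrightarrow> N (indic A) \<le> C * W11_norm E \<nu> (indic A)"
  shows "\<forall>f. N f \<le> C * W11_norm E \<nu> f"
proof -
  have "N (indic A) \<le> C * W11_norm E \<nu> (indic A)" for A
    using \<open>graph_connected E\<close>
  proof (induction A rule: simply_connected_induct)
    case (simply_connected A)
    then show ?case
      using assms(6) by blast
  next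
    case (Compl A)
    then show ?case
      by (simp only: seminorm_indic_Compl[OF assms(3,4)] W11_norm_indic_Compl)
  next
    case (separated_Un A B)
    then have "N (indic (A \<union> B)) \<le> N (indic A) + N (indic B)"
      using seminorm_indic_Un_le[OF assms(3)] unfolding separated_def by blast
    then show ?case
      unfolding W11_norm_indic_Un_separated[OF separated_Un(1)] distrib_left
      using separated_Un(2,3) by linarith
  qed
  then show ?thesis
    using seminorm_le_W11_norm_if_indic[OF assms(3,4)] by blast
qed

end
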